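(* Suppose QEPmin is in the hard case, and let $(\lambda_*,z_* )$ be a minimizer of QEPmin with $b_0^{\top}z_*=0$. Then: (1) $\lambda_*=\lambda_{\min}(H)$, the smallest eigenvalue of $H$; (2) $g_0\perp\mathcal U$, where $\mathcal U$ is the eigenspace of $H$ associated with $\lambda_{\min}(H)$; (3) $b_0\perp\mathcal V$, where $\mathcal V$ is the eigenspace of $PAP$ associated with its eigenvalue $\lambda_{\min}(H)\in\operatorname{eig}(PAP)$.
   Context: Let $A\in\mathbb{R}^{n\times n}$ be symmetric, $C\in\mathbb{R}^{n\times m}$ ($m<n$) full column rank, $b\in\mathbb{R}^m$, $n_0=C(C^{\top}C)^{-1}b$ with $\|n_0\|<1$, $\gamma=\sqrt{1-\|n_0\|^2}$, $P=I-C(C^{\top}C)^{-1}C^{\top}$ (orthogonal projector onto $\mathcal N(C^{\top})$), $b_0=PAn_0$, assumed nonzero. Let $S_1\in\mathbb{R}^{n\times(n-m)}$ have orthonormal columns spanning $\mathcal N(C^{\top})$, $H=S_1^{\top}AS_1$, $g_0=S_1^{\top}b_0$. QEPmin: minimize $\lambda$ over pairs $(\lambda,z)$ with $\lambda\in\mathbb{R}$, $0\neq z\in\mathcal N(C^{\top})$ and $(PAP-\lambda I)^2z=\gamma^{-2}b_0b_0^{\top}z$. QEPmin is in the hard case if it has a minimizer $(\lambda_*,z_* )$ with $b_0^{\top}z_*=0$; otherwise in the easy case. *)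

theory Defs
  imports "HOL-Analysis.Analysis"
begin

definition mat_eigenvalue :: "real^'n^'n \<Rightarrow> real \<Rightarrow> bool" where
  "mat_eigenvalue M l \<longleftrightarrow> (\<exists>v. v \<noteq> 0 \<and> M *v v = l *\<^sub>R v)"

definition eigenspace :: "real^'n^'n \<Rightarrow> real \<Rightarrow> (real^'n) set" where
  "eigenspace M l = {v. M *v v = l *\<^sub>R v}"

definition lambda_min :: "real^'n^'n \<Rightarrow> real" where
  "lambda_min M = Min {l. mat_eigenvalue M l}"

definition outer :: "real^'n \<Rightarrow> real^'n \<Rightarrow> real^'n^'n" where
  "outer u v = (\<chi> i j. u $ i * v $ j)"

definition qep_feasible ::
  "real^'n^'n \<Rightarrow> real^'m^'n \<Rightarrow> real^'n^'n \<Rightarrow> real \<Rightarrow> real^'n \<Rightarrow> real \<Rightarrow> real^'n \<Rightarrow> bool" where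
  "qep_feasible A C P \<gamma> b0 l z \<longleftrightarrow>
     z \<noteq> 0 \<and> transpose C *v z = 0 \<and>
     ((P ** A ** P - l *\<^sub>R mat 1) ** (P ** A ** P - l *\<^sub>R mat 1)) *v z
       = (inverse (\<gamma>\<^sup>2) *\<^sub>R outer b0 b0) *v z"

definition qep_minimizer ::
  "real^'n^'n \<Rightarrow> real^'m^'n \<Rightarrow> real^'n^'n \<Rightarrow> real \<Rightarrow> real^'n \<Rightarrow> real \<Rightarrow> real^'n \<Rightarrow> bool" where
  "qep_minimizer A C P \<gamma> b0 l z \<longleftrightarrow>
     qep_feasible A C P \<gamma> b0 l z \<and> (\<forall>l' z'. qep_feasible A C P \<gamma> b0 l' z' \<longrightarrow> l \<le> l')"

end

(* Written in the orthonormal basis S1 of the null space of C\<^sup>T, the projector P is S1 S1\<^sup>T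
   and PAP is S1 H S1\<^sup>T, so QEP becomes the reduced problem
   (H - l I)\<^sup>2 y = \<gamma>\<^sup>-\<^sup>2 (g0 \<bullet> y) g0 for y = S1\<^sup>T z.
   For the minimizer with b0 \<bullet> z = 0 the right-hand side vanishes, and symmetry turns
   (PAP - lam I)\<^sup>2 z = 0 into PAP z = lam z, so lam is an eigenvalue of H.
   If g0 were not orthogonal to an eigenvector u for \<mu> = \<lambda>\<^sub>m\<^sub>i\<^sub>n(H), then
   l \<mapsto> |(H - l I)\<^sup>-\<^sup>1 g0| would take the value \<gamma> at some l < \<mu> by the intermediate
   value theorem, and y = (H - l I)\<^sup>-\<^sup>2 g0 would solve the reduced problem with l < \<mu> \<le> lam,
   contradicting minimality. Hence g0 \<bullet> u = 0, u itself solves the reduced problem at \<mu>,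
   and lam = \<mu>; statement (3) is (2) transported by S1. *)

theory Submission
  imports Defs
begin

lemma inner_matrix_vector_transpose:
  fixes M :: "real^'a^'b"
  shows "(M *v x) \<bullet> y = x \<bullet> (transpose M *v y)"
  by (metis dot_lmul_matrix inner_commute transpose_matrix_vector)

lemma inner_symmetric_matrix:
  fixes M :: "real^'a^'a"
  assumes "transpose M = M"
  shows "(M *v x) \<bullet> y = x \<bullet> (M *v y)"
  by (metis assms inner_matrix_vector_transpose)

lemma transpose_diff:
  fixes M N :: "real^'a^'b"
  shows "transpose (M - N) = transpose M - transpose N"
  by (simp add: vec_eq_iff transpose_def)

lemma matrix_vector_mult_shift:
  fixes H :: "real^'a^'a"
  shows "(H - l *\<^sub>R mat 1) *v v = H *v v - l *\<^sub>R v"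
  by (simp add: matrix_vector_mult_diff_rdistrib flip: scaleR_matrix_vector_assoc)

lemma matrix_vector_mult_outer: "outer u v *v z = (v \<bullet> z) *\<^sub>R u"
  by (simp add: vec_eq_iff matrix_vector_mult_def outer_def inner_vec_def sum_distrib_left
      algebra_simps)

lemma symmetric_matrix_square_kernel:
  fixes M :: "real^'a^'a"
  assumes "transpose M = M" and "M *v (M *v z) = 0"
  shows "M *v z = 0"
proof -
  have "(M *v z) \<bullet> (M *v z) = z \<bullet> (M *v (M *v z))"
    by (rule inner_symmetric_matrix[OF assms(1)])
  then show ?thesis using assms(2) by simp
qed

lemma invertible_shift_iff:
  fixes H :: "real^'a^'a"
  shows "invertible (H - l *\<^sub>R mat 1) \<longleftrightarrow> \<not> mat_eigenvalue H l"
  by (simp add: invertible_left_inverse matrix_left_invertible_ker matrix_vector_mult_shift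
      mat_eigenvalue_def) blast

lemma eigenvectors_orthogonal:
  fixes H :: "real^'a^'a"
  assumes "transpose H = H" and "H *v v = l *\<^sub>R v" and "H *v w = l' *\<^sub>R w" and "l \<noteq> l'"
  shows "v \<bullet> w = 0"
proof -
  have "l * (v \<bullet> w) = (H *v v) \<bullet> w" using assms(2) by simp
  also have "\<dots> = v \<bullet> (H *v w)" by (rule inner_symmetric_matrix[OF assms(1)])
  also have "\<dots> = l' * (v \<bullet> w)" using assms(3) by simp
  finally show ?thesis using assms(4) by simp
qed

lemma finite_eigenvalues_symmetric:
  fixes H :: "real^'a^'a"
  assumes "transpose H = H"
  shows "finite {l. mat_eigenvalue H l}"
proof -
  define E where "E = {l. mat_eigenvalue H l}"
  define eigvec where "eigvec l = (SOME v. v \<noteq> 0 \<and> H *v v = l *\<^sub>R v)" for l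
  have eigvec: "eigvec l \<noteq> 0" "H *v eigvec l = l *\<^sub>R eigvec l" if "l \<in> E" for l
    using that someI_ex[of "\<lambda>v. v \<noteq> 0 \<and> H *v v = l *\<^sub>R v"]
    unfolding E_def mat_eigenvalue_def eigvec_def by auto
  have orth: "eigvec l \<bullet> eigvec l' = 0" if "l \<in> E" "l' \<in> E" "l \<noteq> l'" for l l'
    using eigenvectors_orthogonal[OF assms eigvec(2) eigvec(2)] that by blast
  have inj: "inj_on eigvec E"
    by (metis inj_onI inner_eq_zero_iff orth eigvec(1))
  have "pairwise orthogonal (eigvec ` E)"
    by (auto simp: pairwise_def orthogonal_def intro: orth)
  moreover have "0 \<notin> eigvec ` E" using eigvec(1) by auto
  ultimately have "finite (eigvec ` E)"
    using pairwise_orthogonal_independent independent_bound by blast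
  then show ?thesis using inj finite_imageD unfolding E_def by blast
qed

lemma
  fixes H :: "real^'a^'a"
  assumes "transpose H = H" and "mat_eigenvalue H l"
  shows mat_eigenvalue_lambda_min: "mat_eigenvalue H (lambda_min H)"
    and lambda_min_le: "lambda_min H \<le> l"
  using assms Min_in Min_le finite_eigenvalues_symmetric[OF assms(1)]
  unfolding lambda_min_def by blast+

lemma continuous_on_det:
  fixes M :: "'a::topological_space \<Rightarrow> real^'k^'k"
  assumes "\<And>i j. continuous_on S (\<lambda>l. M l $ i $ j)"
  shows "continuous_on S (\<lambda>l. det (M l))"
  unfolding det_def by (intro continuous_intros assms)

lemma continuous_on_linear_solution:
  fixes M :: "'a::topological_space \<Rightarrow> real^'k^'k"
  assumes entries: "\<And>i j. continuous_on S (\<lambda>l. M l $ i $ j)"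
    and det: "\<And>l. l \<in> S \<Longrightarrow> det (M l) \<noteq> 0"
  obtains x where "continuous_on S x" and "\<And>l. l \<in> S \<Longrightarrow> M l *v x l = g"
proof
  define x where "x l = (\<chi> k. det (\<chi> i j. if j = k then g $ i else M l $ i $ j) / det (M l))" for l
  show "M l *v x l = g" if "l \<in> S" for l
    using cramer[OF det[OF that]] unfolding x_def by blast
  have "continuous_on S (\<lambda>l. if j = k then g $ i else M l $ i $ j)" for i j k
    by (cases "j = k") (simp_all add: entries)
  then show "continuous_on S x"
    unfolding x_def by (auto intro!: continuous_intros continuous_on_det entries det)
qed

lemma norm_shift_solution_le:
  fixes H :: "real^'a^'a"
  assumes K: "\<And>x. norm (H *v x) \<le> norm x * K" and l: "l < - K"
    and v: "H *v v - l *\<^sub>R v = g"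
  shows "norm v \<le> norm g / (- K - l)"
proof -
  have "- (norm v * (norm v * K)) \<le> v \<bullet> (H *v v)"
  proof -
    have "\<bar>v \<bullet> (H *v v)\<bar> \<le> norm v * norm (H *v v)" by (rule Cauchy_Schwarz_ineq2)
    also have "\<dots> \<le> norm v * (norm v * K)" using K by (simp add: mult_left_mono)
    finally show ?thesis by linarith
  qed
  moreover have "v \<bullet> g = v \<bullet> (H *v v) - l * (norm v)\<^sup>2"
    using v by (auto simp: inner_diff_right power2_norm_eq_inner)
  moreover have "v \<bullet> g \<le> norm v * norm g" by (rule norm_cauchy_schwarz)
  ultimately have "(- K - l) * norm v * norm v \<le> norm g * norm v"
    by (simp add: algebra_simps power2_eq_square)
  then have "(- K - l) * norm v \<le> norm g"
    by (cases "v = 0") auto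
  then show ?thesis using l by (simp add: field_simps)
qed

lemma inner_shift_solution_eigenvector:
  fixes H :: "real^'a^'a"
  assumes "transpose H = H" and "H *v u = \<mu> *\<^sub>R u" and "H *v v - l *\<^sub>R v = g"
  shows "g \<bullet> u = (\<mu> - l) * (v \<bullet> u)"
proof -
  have "g \<bullet> u = (H *v v) \<bullet> u - l * (v \<bullet> u)"
    using assms(3) by (auto simp: inner_diff_left)
  also have "(H *v v) \<bullet> u = \<mu> * (v \<bullet> u)"
    using assms(2) by (simp add: inner_symmetric_matrix[OF assms(1)])
  finally show ?thesis by (simp add: algebra_simps)
qed

(* The norm of the solution of (H - l I) v = g tends to 0 as l tends to minus infinity, and it
   blows up as l approaches \<mu> from below when g is not orthogonal to an eigenvector of \<mu>;
   being continuous in between, it attains every positive value. *)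

lemma secular_root_below_eigenvalue:
  fixes H :: "real^'a^'a" and g u :: "real^'a"
  assumes H_sym: "transpose H = H"
    and below: "\<And>l. mat_eigenvalue H l \<Longrightarrow> \<mu> \<le> l"
    and u: "H *v u = \<mu> *\<^sub>R u" and gu: "g \<bullet> u \<noteq> 0" and \<gamma>: "\<gamma> > 0"
  obtains l v where "l < \<mu>" and "H *v v - l *\<^sub>R v = g" and "norm v = \<gamma>"
proof -
  have "det (H - l *\<^sub>R mat 1) \<noteq> 0" if "l \<in> {..<\<mu>}" for l
    using below that invertible_shift_iff invertible_det_nz by (metis lessThan_iff not_le)
  moreover have "continuous_on {..<\<mu>} (\<lambda>l. (H - l *\<^sub>R mat 1) $ i $ j)" for i j
    by (auto simp: mat_def intro!: continuous_intros)
  ultimately obtain r where r_cont: "continuous_on {..<\<mu>} r"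
    and r: "\<And>l. l < \<mu> \<Longrightarrow> H *v r l - l *\<^sub>R r l = g"
    using continuous_on_linear_solution[of "{..<\<mu>}" "\<lambda>l. H - l *\<^sub>R mat 1" g]
    by (metis lessThan_iff matrix_vector_mult_shift)
  obtain K where K: "\<And>x. norm (H *v x) \<le> norm x * K"
    using bounded_linear.bounded[OF matrix_vector_mul_bounded_linear] by blast
  have g: "norm g > 0" and u0: "norm u > 0" using gu by auto
  define b where "b = \<mu> - \<bar>g \<bullet> u\<bar> / (\<gamma> * norm u)"
  define a where "a = min b (- K - norm g / \<gamma>)"
  have b: "b < \<mu>" using gu u0 \<gamma> by (simp add: b_def)
  have ab: "a \<le> b" by (simp add: a_def)
  have aK: "a < - K" using g \<gamma> unfolding a_def by (smt (verit) divide_pos_pos)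
  then have "norm (r a) \<le> norm g / (- K - a)"
    using norm_shift_solution_le[OF K _ r] ab b by simp
  also have "\<dots> \<le> norm g / (norm g / \<gamma>)"
    using g \<gamma> aK by (intro divide_left_mono) (auto simp: a_def)
  finally have ra: "norm (r a) \<le> \<gamma>" using g by simp
  have "\<bar>g \<bullet> u\<bar> = (\<mu> - b) * \<bar>r b \<bullet> u\<bar>"
    using inner_shift_solution_eigenvector[OF H_sym u r[OF b]] b by (simp add: abs_mult)
  also have "\<dots> \<le> (\<mu> - b) * (norm (r b) * norm u)"
    using b by (intro mult_left_mono Cauchy_Schwarz_ineq2) auto
  also have "\<dots> = \<bar>g \<bullet> u\<bar> * norm (r b) / \<gamma>"
    using u0 by (simp add: b_def)
  finally have rb: "\<gamma> \<le> norm (r b)"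
    using gu \<gamma> by (simp add: field_simps)
  have "continuous_on {a..b} (\<lambda>l. norm (r l))"
    using b by (intro continuous_on_norm continuous_on_subset[OF r_cont]) auto
  then obtain l where "a \<le> l" "l \<le> b" "norm (r l) = \<gamma>"
    using IVT'[OF ra rb ab] by blast
  then show thesis using that[of l "r l"] r b by simp
qed

lemma secular_root_gives_reduced_qep_solution:
  fixes H :: "real^'a^'a"
  assumes H_sym: "transpose H = H" and l: "\<not> mat_eigenvalue H l" and \<gamma>: "\<gamma> > 0"
    and v: "H *v v - l *\<^sub>R v = g" and norm_v: "norm v = \<gamma>"
  obtains y where "y \<noteq> 0"
    and "(H - l *\<^sub>R mat 1) *v ((H - l *\<^sub>R mat 1) *v y) = (inverse (\<gamma>\<^sup>2) * (g \<bullet> y)) *\<^sub>R g"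
proof -
  obtain y where y: "(H - l *\<^sub>R mat 1) *v y = v"
    using l unfolding invertible_shift_iff[symmetric] invertible_def
    by (metis matrix_vector_mul_assoc matrix_vector_mul_lid)
  have "g \<bullet> y = v \<bullet> v"
    using inner_symmetric_matrix[of "H - l *\<^sub>R mat 1" v y] H_sym v y
    by (simp add: transpose_diff transpose_scalar matrix_vector_mult_shift)
  then have "g \<bullet> y = \<gamma>\<^sup>2" using norm_v by (simp add: dot_square_norm)
  moreover have "y \<noteq> 0" using y norm_v \<gamma> by auto
  ultimately show thesis using that y v \<gamma> by (simp add: matrix_vector_mult_shift)
qed

lemma reduced_qep_hard_case:
  fixes H :: "real^'a^'a" and g :: "real^'a"
  assumes H_sym: "transpose H = H" and \<gamma>: "\<gamma> > 0" and lam: "mat_eigenvalue H lam"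
    and lam_min: "\<And>l y. y \<noteq> 0 \<Longrightarrow>
      (H - l *\<^sub>R mat 1) *v ((H - l *\<^sub>R mat 1) *v y) = (inverse (\<gamma>\<^sup>2) * (g \<bullet> y)) *\<^sub>R g
      \<Longrightarrow> lam \<le> l"
  shows "lam = lambda_min H \<and> (\<forall>u \<in> eigenspace H (lambda_min H). g \<bullet> u = 0)"
proof -
  define \<mu> where "\<mu> = lambda_min H"
  have below: "\<mu> \<le> l" if "mat_eigenvalue H l" for l
    using lambda_min_le[OF H_sym that] by (simp add: \<mu>_def)
  have perp: "g \<bullet> u = 0" if "u \<in> eigenspace H \<mu>" for u
  proof (rule ccontr)
    assume gu: "g \<bullet> u \<noteq> 0"
    have u: "H *v u = \<mu> *\<^sub>R u" using that unfolding eigenspace_def by simp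
    obtain l v where l: "l < \<mu>" and v: "H *v v - l *\<^sub>R v = g" "norm v = \<gamma>"
      using secular_root_below_eigenvalue[OF H_sym below u gu \<gamma>] by blast
    have "\<not> mat_eigenvalue H l" using below l by force
    then have "lam \<le> l"
      using secular_root_gives_reduced_qep_solution[OF H_sym _ \<gamma> v] lam_min by metis
    then show False using below[OF lam] l by simp
  qed
  obtain u where u: "u \<noteq> 0" "H *v u = \<mu> *\<^sub>R u"
    using mat_eigenvalue_lambda_min[OF H_sym lam] unfolding mat_eigenvalue_def \<mu>_def by blast
  have "g \<bullet> u = 0" using perp u unfolding eigenspace_def by blast
  then have "lam \<le> \<mu>"
    using lam_min[of u \<mu>] u by (simp add: matrix_vector_mult_shift)
  then show ?thesis using below[OF lam] perp unfolding \<mu>_def by auto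
qed

lemma matrix_inv_inverse:
  fixes M :: "real^'a^'a"
  assumes "invertible M"
  shows "M ** matrix_inv M = mat 1" and "matrix_inv M ** M = mat 1"
  using someI_ex[OF assms[unfolded invertible_def]] unfolding matrix_inv_def by blast+

lemma symmetric_matrix_inv:
  fixes M :: "real^'a^'a"
  assumes "invertible M" and "transpose M = M"
  shows "transpose (matrix_inv M) = matrix_inv M"
proof -
  have "transpose (matrix_inv M) ** M = mat 1"
    by (metis assms(2) matrix_inv_inverse(1)[OF assms(1)] matrix_transpose_mul transpose_mat)
  then show ?thesis
    by (metis matrix_inv_inverse(1)[OF assms(1)] matrix_mul_assoc matrix_mul_lid matrix_mul_rid)
qed

lemma invertible_gram:
  fixes C :: "real^'m^'n"
  assumes "rank C = CARD('m)"
  shows "invertible (transpose C ** C)"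
proof -
  have "x = 0" if "(transpose C ** C) *v x = 0" for x
  proof -
    have "(C *v x) \<bullet> (C *v x) = x \<bullet> ((transpose C ** C) *v x)"
      by (simp add: inner_matrix_vector_transpose matrix_vector_mul_assoc del: transpose_matrix_vector)
    then have "C *v x = C *v 0" using that by simp
    then show "x = 0" using assms full_rank_injective by (metis injD)
  qed
  then show ?thesis
    using matrix_left_invertible_ker invertible_left_inverse by blast
qed

definition null_projector :: "real^'m^'n \<Rightarrow> real^'n^'n" where
  "null_projector C = mat 1 - C ** matrix_inv (transpose C ** C) ** transpose C"

context
  fixes C :: "real^'m^'n"
  assumes rank_C: "rank C = CARD('m)"
begin

lemma null_projector_in_null_space: "transpose C *v (null_projector C *v w) = 0"
  using matrix_inv_inverse(1)[OF invertible_gram[OF rank_C]]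
  by (simp add: null_projector_def matrix_vector_mult_diff_rdistrib matrix_vector_mult_diff_distrib
      matrix_vector_mul_assoc matrix_mul_assoc del: transpose_matrix_vector)

lemma null_projector_fixes: "transpose C *v z = 0 \<Longrightarrow> null_projector C *v z = z"
  by (simp add: null_projector_def matrix_vector_mult_diff_rdistrib
      flip: matrix_vector_mul_assoc del: transpose_matrix_vector)

lemma symmetric_null_projector: "transpose (null_projector C) = null_projector C"
  using symmetric_matrix_inv[OF invertible_gram[OF rank_C]]
  by (simp add: null_projector_def transpose_diff matrix_transpose_mul matrix_mul_assoc)

lemma null_projector_eq_orthonormal_basis:
  fixes S :: "real^'k^'n"
  assumes S: "transpose S ** S = mat 1" and range_S: "range ((*v) S) = {v. transpose C *v v = 0}"
  shows "null_projector C = S ** transpose S"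
proof -
  let ?P = "null_projector C"
  have "?P ** S = S"
    using range_S null_projector_fixes by (auto simp: matrix_eq simp flip: matrix_vector_mul_assoc)
  then have PS: "transpose S ** ?P = transpose S"
    by (metis matrix_transpose_mul symmetric_null_projector)
  have "S ** transpose S ** ?P = ?P"
  proof (rule matrix_eq[THEN iffD2], rule allI)
    fix w
    obtain x where x: "?P *v w = S *v x" using range_S null_projector_in_null_space by blast
    show "(S ** transpose S ** ?P) *v w = ?P *v w"
      by (metis S x matrix_mul_assoc matrix_mul_rid matrix_vector_mul_assoc)
  qed
  then show ?thesis by (simp add: PS flip: matrix_mul_assoc)
qed

end

context
  fixes S :: "real^'k^'n"
  assumes S: "transpose S ** S = mat 1"
begin

lemma orthonormal_mult_eq_0_iff: "S *v y = 0 \<longleftrightarrow> y = 0"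
  by (metis S matrix_vector_mul_assoc matrix_vector_mul_lid matrix_vector_mult_0_right)

lemma compression_mult_vector: "(S ** H ** transpose S) *v (S *v y) = S *v (H *v y)"
  by (metis S matrix_mul_assoc matrix_mul_rid matrix_vector_mul_assoc)

lemma transpose_mult_compression:
  "transpose S *v ((S ** H ** transpose S) *v v) = H *v (transpose S *v v)"
  by (metis S matrix_mul_assoc matrix_mul_lid matrix_vector_mul_assoc)

lemma compression_eigenvector:
  "(S ** H ** transpose S) *v v = \<mu> *\<^sub>R v \<Longrightarrow> H *v (transpose S *v v) = \<mu> *\<^sub>R (transpose S *v v)"
  by (metis transpose_mult_compression matrix_vector_mult_scaleR)

lemma compression_eigenspace_orthogonal:
  assumes "\<forall>u \<in> eigenspace H \<mu>. g \<bullet> u = 0"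
  shows "\<forall>v \<in> eigenspace (S ** H ** transpose S) \<mu>. (S *v g) \<bullet> v = 0"
  using assms compression_eigenvector
  by (auto simp: eigenspace_def inner_matrix_vector_transpose)

lemma compression_eigenvalue:
  assumes "(S ** H ** transpose S) *v (S *v y) = \<mu> *\<^sub>R (S *v y)" and "S *v y \<noteq> 0"
  shows "mat_eigenvalue H \<mu>"
  using compression_eigenvector[OF assms(1)] assms(2) S orthonormal_mult_eq_0_iff
  unfolding mat_eigenvalue_def by (metis matrix_vector_mul_assoc matrix_vector_mul_lid)

lemma qep_feasible_compression:
  fixes A P :: "real^'n^'n" and C :: "real^'m^'n"
  assumes range_S: "range ((*v) S) = {v. transpose C *v v = 0}"
    and PAP: "P ** A ** P = S ** H ** transpose S"
    and y: "y \<noteq> 0"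
    and eq: "(H - l *\<^sub>R mat 1) *v ((H - l *\<^sub>R mat 1) *v y) = (inverse (\<gamma>\<^sup>2) * (g \<bullet> y)) *\<^sub>R g"
  shows "qep_feasible A C P \<gamma> (S *v g) l (S *v y)"
proof -
  have shift: "(P ** A ** P - l *\<^sub>R mat 1) *v (S *v x) = S *v ((H - l *\<^sub>R mat 1) *v x)" for x
    by (simp add: PAP matrix_vector_mult_shift compression_mult_vector matrix_vector_mult_diff_distrib
        matrix_vector_mult_scaleR)
  have "S *v y \<noteq> 0" using y orthonormal_mult_eq_0_iff by blast
  moreover have "transpose C *v (S *v y) = 0" using range_S by blast
  moreover have "(S *v g) \<bullet> (S *v y) = g \<bullet> y"
    by (metis S inner_matrix_vector_transpose inner_commute matrix_vector_mul_assoc matrix_vector_mul_lid)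
  moreover have "((P ** A ** P - l *\<^sub>R mat 1) ** (P ** A ** P - l *\<^sub>R mat 1)) *v (S *v y)
      = (inverse (\<gamma>\<^sup>2) * (g \<bullet> y)) *\<^sub>R (S *v g)"
    by (simp only: shift eq flip: matrix_vector_mul_assoc) (simp add: matrix_vector_mult_scaleR)
  ultimately show ?thesis
    unfolding qep_feasible_def
    by (simp add: matrix_vector_mult_outer flip: scaleR_matrix_vector_assoc)
qed

end

lemma qep_feasible_orthogonal_eigenvector:
  assumes "transpose (P ** A ** P) = P ** A ** P"
    and "qep_feasible A C P \<gamma> b0 l z" and "b0 \<bullet> z = 0"
  shows "(P ** A ** P) *v z = l *\<^sub>R z"
proof -
  define M where "M = P ** A ** P - l *\<^sub>R mat 1"
  have "(M ** M) *v z = (inverse (\<gamma>\<^sup>2) *\<^sub>R outer b0 b0) *v z"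
    using assms(2) unfolding qep_feasible_def M_def by blast
  also have "\<dots> = 0"
    using assms(3) by (simp add: matrix_vector_mult_outer flip: scaleR_matrix_vector_assoc)
  finally have "M *v (M *v z) = 0" by (simp add: matrix_vector_mul_assoc)
  moreover have "transpose M = M"
    using assms(1) by (simp add: M_def transpose_diff transpose_scalar)
  ultimately have "M *v z = 0" using symmetric_matrix_square_kernel by blast
  then show ?thesis by (simp add: M_def matrix_vector_mult_shift)
qed

theorem theorem2p11:
  fixes A :: "real^'n^'n" and C :: "real^'m^'n" and b :: "real^'m"
    and S1 :: "real^'k^'n" and n0 b0 :: "real^'n" and g0 :: "real^'k"
    and P :: "real^'n^'n" and H :: "real^'k^'k" and \<gamma> lam :: real and z :: "real^'n"
  assumes "CARD('m) < CARD('n)"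
    and "transpose A = A"
    and "rank C = CARD('m)"
    and "n0 = C *v (matrix_inv (transpose C ** C) *v b)"
    and "norm n0 < 1"
    and "\<gamma> = sqrt (1 - (norm n0)\<^sup>2)"
    and "P = mat 1 - C ** matrix_inv (transpose C ** C) ** transpose C"
    and "b0 = P *v (A *v n0)"
    and "b0 \<noteq> 0"
    and "CARD('k) = CARD('n) - CARD('m)"
    and "transpose S1 ** S1 = mat 1"
    and "range (\<lambda>x. S1 *v x) = {v. transpose C *v v = 0}"
    and "H = transpose S1 ** A ** S1"
    and "g0 = transpose S1 *v b0"
    and "qep_minimizer A C P \<gamma> b0 lam z"
    and "b0 \<bullet> z = 0"
  shows "lam = lambda_min H
    \<and> (\<forall>u \<in> eigenspace H (lambda_min H). g0 \<bullet> u = 0)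
    \<and> mat_eigenvalue (P ** A ** P) (lambda_min H)
    \<and> (\<forall>v \<in> eigenspace (P ** A ** P) (lambda_min H). b0 \<bullet> v = 0)"
proof -
  note A_sym = assms(2) and rank_C = assms(3) and S1 = assms(11) and range_S1 = assms(12)
  have \<gamma>: "\<gamma> > 0"
    using assms(5,6) by (simp add: power_less_one_iff)
  have P: "P = S1 ** transpose S1"
    using null_projector_eq_orthonormal_basis[OF rank_C S1 range_S1]
    by (simp add: assms(7) null_projector_def)
  have PAP: "P ** A ** P = S1 ** H ** transpose S1"
    by (simp add: P assms(13) matrix_mul_assoc)
  have b0: "b0 = S1 *v g0"
    by (metis P S1 assms(8,14) matrix_mul_assoc matrix_mul_lid matrix_vector_mul_assoc)
  have H_sym: "transpose H = H" by (simp add: assms(13) A_sym matrix_transpose_mul matrix_mul_assoc)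
  have feasible: "qep_feasible A C P \<gamma> b0 lam z"
    and minimal: "\<And>l z'. qep_feasible A C P \<gamma> b0 l z' \<Longrightarrow> lam \<le> l"
    using assms(15) unfolding qep_minimizer_def by auto
  have PAPz: "(P ** A ** P) *v z = lam *\<^sub>R z"
    using qep_feasible_orthogonal_eigenvector[OF _ feasible assms(16)] H_sym
    by (simp add: PAP matrix_transpose_mul matrix_mul_assoc)
  have z: "z \<noteq> 0" "transpose C *v z = 0" using feasible unfolding qep_feasible_def by blast+
  then obtain y where "z = S1 *v y" using range_S1 by blast
  then have "mat_eigenvalue H lam"
    using compression_eigenvalue[OF S1] PAPz PAP z by simp
  moreover have "lam \<le> l" if "y \<noteq> 0"
    and "(H - l *\<^sub>R mat 1) *v ((H - l *\<^sub>R mat 1) *v y) = (inverse (\<gamma>\<^sup>2) * (g0 \<bullet> y)) *\<^sub>R g0" for l y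
    using qep_feasible_compression[OF S1 range_S1 PAP that] minimal b0 by blast
  ultimately have lam_min: "lam = lambda_min H"
    and perp: "\<forall>u \<in> eigenspace H (lambda_min H). g0 \<bullet> u = 0"
    using reduced_qep_hard_case[OF H_sym \<gamma>] by blast+
  have "mat_eigenvalue (P ** A ** P) (lambda_min H)"
    using PAPz z lam_min unfolding mat_eigenvalue_def by blast
  moreover have "\<forall>v \<in> eigenspace (P ** A ** P) (lambda_min H). b0 \<bullet> v = 0"
    unfolding PAP b0 using compression_eigenspace_orthogonal[OF S1 perp] .
  ultimately show ?thesis using lam_min perp by blast
qed

end
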